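(* Let $\bar\mu=(\mu,\mu_1,\mu_2)\in\{+,-\}^3$ and let $\mathfrak m_{\bar\mu}$ be the multiplier satisfying $R_\mu\mathcal N_{\bar\mu}(R^{-1}_{\mu_1}G_1,R^{-1}_{\mu_2}G_2)=Q_{\bar\mu}[\mathfrak m_{\bar\mu}](G_1,G_2)$ for all scalar $G_1,G_2$. Then $Q_{\bar\mu}[\mathfrak m_{\bar\mu}](G_1,G_2)$ is a finite linear combination (with constant coefficients) of bilinear expressions of the form $$|\nabla|e^{-\mu it\Lambda}D_0\big[(D_1e^{\mu_1it\Lambda}G_1)\cdot(D_2e^{\mu_2it\Lambda}G_2)\big],$$ where each of $D_0,D_1,D_2$ is a product of operators from $\{\Lambda,\sqrt{1-\Lambda^2},\partial_1/|\nabla_h|,\partial_2/|\nabla_h|\}$. The same statement holds with these expressions replaced by $e^{-\mu it\Lambda}D_0[(D_1e^{\mu_1it\Lambda}G_1)\cdot(|\nabla|D_2e^{\mu_2it\Lambda}G_2)]$.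
   Context: $\hat f(\xi)=\int f(x)e^{-ix\cdot\xi}dx$. $\Lambda(\xi)=\xi_3/|\xi|$; $\Lambda$, $\sqrt{1-\Lambda^2}$, $e^{\pm it\Lambda}$ denote the Fourier multipliers with symbols $\Lambda(\xi)$, $\sqrt{1-\Lambda(\xi)^2}$, $e^{\pm it\Lambda(\xi)}$; $\nabla_h=(\partial_1,\partial_2)$. $\mathbb P_L=\mathrm{Id}-\nabla\Delta^{-1}\nabla\cdot$, $\mathbb P_\pm=\frac12(\mathrm{Id}\pm|\nabla|^{-1}\nabla\times)$. $\mathcal N_{\bar\mu}(\vec g_1,\vec g_2)=-e^{-\mu it\Lambda}\mathbb P_\mu\mathbb P_L\nabla\cdot(e^{\mu_1it\Lambda}\vec g_1\otimes e^{\mu_2it\Lambda}\vec g_2)$, $(\vec a\otimes\vec b)_{ij}=a_ib_j$, $(\nabla\cdot M)_j=\sum_i\partial_iM_{ij}$. $R_\pm\vec v=\frac12\vec e_3\cdot(|\nabla_h|^{-1}\nabla\times\vec v\pm|\nabla||\nabla_h|^{-1}\vec v)$; for scalar $G$, $\widehat{R^{-1}_\pm G}(\xi)=-i\hat G(\xi)(\vec\Gamma_1\pm i\vec\Gamma_2)$ with $\vec\Gamma_1=(-\xi_2/|\xi_h|,\xi_1/|\xi_h|,0)$, $\vec\Gamma_2=\frac{\xi}{|\xi|}\times\vec\Gamma_1$. $\mathcal F\{Q_{\bar\mu}[\mathfrak m](f_1,f_2)\}(\xi)=(2\pi)^{-3}\int e^{it\Phi_{\bar\mu}(\xi,\eta)}\mathfrak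 m(\xi,\eta)\hat f_1(\xi-\eta)\hat f_2(\eta)d\eta$, $\Phi_{\bar\mu}=-\mu\Lambda(\xi)+\mu_1\Lambda(\xi-\eta)+\mu_2\Lambda(\eta)$. *)

theory Defs
  imports "HOL-Analysis.Analysis"
begin

text \<open>Everything is formulated on the Fourier side (symbols). Frequencies are
  xi :: real^3; complex vectors are complex^3. Signs mu are reals in {-1,1}.\<close>

definition Lam :: "real^3 \<Rightarrow> real" where
  "Lam xi = xi$3 / norm xi"

definition hnorm :: "real^3 \<Rightarrow> real" where
  "hnorm xi = sqrt ((xi$1)^2 + (xi$2)^2)"

definition cvec :: "real^3 \<Rightarrow> complex^3" where
  "cvec v = (\<chi> i. complex_of_real (v$i))"

text \<open>complex bilinear dot product (no conjugation) and complex cross product\<close>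
definition cdot :: "complex^3 \<Rightarrow> complex^3 \<Rightarrow> complex" where
  "cdot a b = (\<Sum>i\<in>UNIV. a$i * b$i)"

definition ccross :: "complex^3 \<Rightarrow> complex^3 \<Rightarrow> complex^3" where
  "ccross a b = vector [a$2 * b$3 - a$3 * b$2,
                        a$3 * b$1 - a$1 * b$3,
                        a$1 * b$2 - a$2 * b$1]"

definition Gamma1 :: "real^3 \<Rightarrow> real^3" where
  "Gamma1 xi = vector [- xi$2 / hnorm xi, xi$1 / hnorm xi, 0]"

definition Gamma2 :: "real^3 \<Rightarrow> real^3" where
  "Gamma2 xi = cross3 ((1 / norm xi) *\<^sub>R xi) (Gamma1 xi)"

text \<open>symbol of R^{-1}_mu: hat(R^{-1}_mu G)(xi) = Rinv_sym mu xi * hat G(xi)\<close>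
definition Rinv_sym :: "real \<Rightarrow> real^3 \<Rightarrow> complex^3" where
  "Rinv_sym mu xi = (- \<i>) *s (cvec (Gamma1 xi) + (complex_of_real mu * \<i>) *s cvec (Gamma2 xi))"

text \<open>symbol of P_L = Id - nabla Delta^{-1} nabla\<cdot>\<close>
definition PL_sym :: "real^3 \<Rightarrow> complex^3 \<Rightarrow> complex^3" where
  "PL_sym xi v = v - (cdot (cvec xi) v / complex_of_real ((norm xi)^2)) *s cvec xi"

text \<open>symbol of P_mu = 1/2 (Id + mu |nabla|^{-1} nabla\<times>)\<close>
definition Pmu_sym :: "real \<Rightarrow> real^3 \<Rightarrow> complex^3 \<Rightarrow> complex^3" where
  "Pmu_sym mu xi v = (1/2) *s (v + complex_of_real (mu / norm xi) *s ccross (\<i> *s cvec xi) v)"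

text \<open>symbol of R_mu v = 1/2 e_3\<cdot>(|nabla_h|^{-1} nabla\<times>v + mu |nabla| |nabla_h|^{-1} v)\<close>
definition Rmu_sym :: "real \<Rightarrow> real^3 \<Rightarrow> complex^3 \<Rightarrow> complex" where
  "Rmu_sym mu xi v = (1/2) * ((ccross (\<i> *s cvec xi) v)$3 / complex_of_real (hnorm xi)
                     + complex_of_real (mu * norm xi / hnorm xi) * v$3)"

text \<open>The multiplier m_{mu-bar}(xi,eta) with
  R_mu N_{mu-bar}(R^{-1}_{mu1} G1, R^{-1}_{mu2} G2) = Q_{mu-bar}[m](G1,G2):
  composition of the symbols of -P_mu P_L nabla\<cdot>( a \<otimes> b ), where
  (nabla\<cdot>(a\<otimes>b))_j has symbol sum_i i xi_i a_i(xi-eta) b_j(eta);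
  the phase factors e^{\<plusminus> it Lambda} are those collected in Phi.\<close>
definition m_sym :: "real \<Rightarrow> real \<Rightarrow> real \<Rightarrow> real^3 \<Rightarrow> real^3 \<Rightarrow> complex" where
  "m_sym mu mu1 mu2 xi eta =
     Rmu_sym mu xi (Pmu_sym mu xi (PL_sym xi
       (- ((\<i> * cdot (cvec xi) (Rinv_sym mu1 (xi - eta))) *s Rinv_sym mu2 eta))))"

datatype gen = GLam | GSqrt | GD1 | GD2

fun gen_sym :: "gen \<Rightarrow> real^3 \<Rightarrow> complex" where
  "gen_sym GLam xi = complex_of_real (Lam xi)"
| "gen_sym GSqrt xi = complex_of_real (sqrt (1 - (Lam xi)^2))"
| "gen_sym GD1 xi = \<i> * complex_of_real (xi$1 / hnorm xi)"
| "gen_sym GD2 xi = \<i> * complex_of_real (xi$2 / hnorm xi)"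

definition prod_sym :: "gen list \<Rightarrow> real^3 \<Rightarrow> complex" where
  "prod_sym ds xi = prod_list (map (\<lambda>d. gen_sym d xi) ds)"

end

theory Submission
  imports Defs
begin

(* On the Fourier side the statement is pure algebra in the generator symbols Lambda,
   sqrt(1 - Lambda^2), d_1/|nabla_h|, d_2/|nabla_h|. Away from the vertical axis the components
   of xi/|xi|, Gamma_1(xi), Gamma_2(xi), and hence of the symbol of R^{-1}_mu, are polynomials
   in them, and R_mu P_mu P_L acts on a vector u as u |-> (i Gamma_1(xi).u + mu Gamma_2(xi).u)/2.
   So m is -i xi.R^{-1}_mu1(xi-eta) times a generator polynomial, and writing xi = |xi| xi/|xi|
   gives the first expansion. Since R^{-1} produces divergence-free fields,
   (xi-eta).R^{-1}_mu1(xi-eta) = 0, so xi may be replaced by eta = |eta| eta/|eta|, which gives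
   the second. *)

section \<open>Generator symbols\<close>

lemma norm_squared_vec3: "(norm (z::real^3))^2 = z$1^2 + z$2^2 + z$3^2"
  by (simp add: norm_eq_sqrt_inner inner_vec_def sum_3 power2_eq_square)

lemma hnorm_squared: "(hnorm z)^2 = z$1^2 + z$2^2"
  unfolding hnorm_def by simp

lemma hnorm_pos: "hnorm z \<noteq> 0 \<Longrightarrow> 0 < hnorm z"
  unfolding hnorm_def by (simp add: order_le_neq_trans)

lemma norm_nonzero_of_hnorm_nonzero: "hnorm z \<noteq> 0 \<Longrightarrow> norm z \<noteq> 0"
  unfolding hnorm_def by auto

lemma Lam_squared_le_1: "(Lam z)^2 \<le> 1"
proof (cases "z = 0")
  case False
  have "\<bar>z$3\<bar> \<le> norm z" by (rule component_le_norm_cart)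
  then have "(z$3)^2 \<le> (norm z)^2" by (metis abs_ge_zero power2_abs power_mono)
  then show ?thesis using False by (simp add: Lam_def power_divide)
qed (simp add: Lam_def)

lemma sqrt_one_minus_Lam_squared: "sqrt (1 - (Lam z)^2) = hnorm z / norm z" if "norm z \<noteq> 0"
proof -
  have "1 - (Lam z)^2 = ((norm z)^2 - (z$3)^2) / (norm z)^2"
    using that by (simp add: Lam_def power_divide field_simps)
  also have "\<dots> = (hnorm z / norm z)^2"
    by (simp add: norm_squared_vec3 hnorm_squared power_divide)
  finally show ?thesis by (simp add: hnorm_def)
qed

lemma gen_sym_Lam_Sqrt: "(gen_sym GLam z)^2 + (gen_sym GSqrt z)^2 = 1"
proof -
  have "(Lam z)^2 + (sqrt (1 - (Lam z)^2))^2 = 1"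
    using Lam_squared_le_1 by simp
  then show ?thesis by (metis gen_sym.simps(1,2) of_real_1 of_real_add of_real_power)
qed

lemma gen_sym_D1_D2: "(gen_sym GD1 z)^2 + (gen_sym GD2 z)^2 = -1" if "hnorm z \<noteq> 0"
proof -
  have "(z$1 / hnorm z)^2 + (z$2 / hnorm z)^2 = (z$1^2 + z$2^2) / (hnorm z)^2"
    by (simp add: power_divide add_divide_distrib)
  also have "\<dots> = 1"
    using that by (simp add: hnorm_squared[symmetric])
  finally have "complex_of_real ((z$1 / hnorm z)^2 + (z$2 / hnorm z)^2) = 1"
    by simp
  moreover have "(gen_sym GD1 z)^2 + (gen_sym GD2 z)^2
      = - complex_of_real ((z$1 / hnorm z)^2 + (z$2 / hnorm z)^2)"
    by (simp add: power_mult_distrib power_divide)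
  ultimately show ?thesis by simp
qed

lemma gen_sym_Sqrt_nonzero: "gen_sym GSqrt z \<noteq> 0" if "hnorm z \<noteq> 0"
  using that hnorm_pos[OF that] norm_nonzero_of_hnorm_nonzero[OF that]
  by (simp add: sqrt_one_minus_Lam_squared)

lemma hnorm_eq_norm_mult_gen_Sqrt:
  "complex_of_real (hnorm z) = complex_of_real (norm z) * gen_sym GSqrt z"
  by (cases "z = 0") (simp_all add: sqrt_one_minus_Lam_squared hnorm_def)

lemma cdot_scale_left: "cdot (c *s x) y = c * cdot x y"
  by (simp add: cdot_def sum_3 algebra_simps)

lemma cdot_scale_right: "cdot x (c *s y) = c * cdot x y"
  by (simp add: cdot_def sum_3 algebra_simps)

lemma cdot_minus_right: "cdot x (- y) = - cdot x y"
  by (simp add: cdot_def sum_3)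

lemma cdot_diff_left: "cdot (x - y) z = cdot x z - cdot y z"
  by (simp add: cdot_def sum_3 algebra_simps)

lemma ccross_scale_left: "ccross (c *s x) y = c *s ccross x y"
  by (simp add: ccross_def vec_eq_iff forall_3 vector_3 algebra_simps)

lemma cvec_diff: "cvec (x - y) = cvec x - cvec y"
  by (simp add: cvec_def vec_eq_iff)

definition dir_gen :: "real^3 \<Rightarrow> complex^3" where
  "dir_gen z = vector [- \<i> * gen_sym GSqrt z * gen_sym GD1 z,
                       - \<i> * gen_sym GSqrt z * gen_sym GD2 z, gen_sym GLam z]"

definition Gamma1_gen :: "real^3 \<Rightarrow> complex^3" where
  "Gamma1_gen z = vector [\<i> * gen_sym GD2 z, - \<i> * gen_sym GD1 z, 0]"

definition Gamma2_gen :: "real^3 \<Rightarrow> complex^3" where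
  "Gamma2_gen z = vector [\<i> * gen_sym GLam z * gen_sym GD1 z,
                          \<i> * gen_sym GLam z * gen_sym GD2 z, gen_sym GSqrt z]"

definition Rinv_gen :: "real \<Rightarrow> real^3 \<Rightarrow> complex^3" where
  "Rinv_gen mu z = (- \<i>) *s (Gamma1_gen z + (complex_of_real mu * \<i>) *s Gamma2_gen z)"

lemma cvec_eq_norm_dir_gen: "cvec z = complex_of_real (norm z) *s dir_gen z" if "hnorm z \<noteq> 0"
proof -
  have z: "norm z \<noteq> 0" by (rule norm_nonzero_of_hnorm_nonzero[OF that])
  then show ?thesis
    unfolding cvec_def dir_gen_def gen_sym.simps sqrt_one_minus_Lam_squared[OF z]
    using hnorm_pos[OF that] by (simp add: vec_eq_iff forall_3 vector_3 Lam_def field_simps)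
qed

lemma cvec_Gamma1: "cvec (Gamma1 z) = Gamma1_gen z"
  unfolding cvec_def Gamma1_def Gamma1_gen_def
  by (simp add: vec_eq_iff forall_3 vector_3 of_real_minus mult.assoc[symmetric])

lemma cvec_Gamma2: "cvec (Gamma2 z) = Gamma2_gen z" if "hnorm z \<noteq> 0"
proof -
  have z: "norm z \<noteq> 0" by (rule norm_nonzero_of_hnorm_nonzero[OF that])
  have "z$1 * z$1 + z$2 * z$2 = hnorm z * hnorm z"
    using hnorm_squared[of z] by (simp add: power2_eq_square)
  then show ?thesis
    unfolding cvec_def Gamma2_def Gamma1_def Gamma2_gen_def gen_sym.simps sqrt_one_minus_Lam_squared[OF z]
    using that z by (simp add: vec_eq_iff forall_3 vector_3 cross3_def Lam_def field_simps)
qed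

lemma Rinv_sym_eq_Rinv_gen: "Rinv_sym mu z = Rinv_gen mu z" if "hnorm z \<noteq> 0"
  unfolding Rinv_sym_def Rinv_gen_def cvec_Gamma1 cvec_Gamma2[OF that] ..

lemma cdot_dir_gen_Rinv_gen: "cdot (dir_gen z) (Rinv_gen mu z) = 0" if "hnorm z \<noteq> 0"
proof -
  have "cdot (dir_gen z) (Rinv_gen mu z) = complex_of_real mu * gen_sym GLam z * gen_sym GSqrt z
      * ((gen_sym GD1 z)^2 + (gen_sym GD2 z)^2 + 1)"
    unfolding dir_gen_def Rinv_gen_def Gamma1_gen_def Gamma2_gen_def
    by (simp add: cdot_def sum_3 algebra_simps power2_eq_square del: gen_sym.simps)
  then show ?thesis using gen_sym_D1_D2[OF that] by simp
qed

lemma cdot_cvec_Rinv_sym: "cdot (cvec z) (Rinv_sym mu z) = 0" if "hnorm z \<noteq> 0"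
  by (simp add: cvec_eq_norm_dir_gen[OF that] Rinv_sym_eq_Rinv_gen[OF that] cdot_scale_left
      cdot_dir_gen_Rinv_gen[OF that])

lemma PL_sym_dir_gen: "PL_sym xi v = v - cdot (dir_gen xi) v *s dir_gen xi" if "hnorm xi \<noteq> 0"
proof -
  have "complex_of_real (norm xi) \<noteq> 0" using norm_nonzero_of_hnorm_nonzero[OF that] by simp
  then show ?thesis
    by (simp add: PL_sym_def cvec_eq_norm_dir_gen[OF that] cdot_scale_left vector_smult_assoc
        power2_eq_square)
qed

lemma Pmu_sym_dir_gen:
  "Pmu_sym mu xi v = (1/2) *s (v + complex_of_real mu *s ccross (\<i> *s dir_gen xi) v)"
  if "hnorm xi \<noteq> 0"
proof -
  have "complex_of_real (norm xi) \<noteq> 0" using norm_nonzero_of_hnorm_nonzero[OF that] by simp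
  then show ?thesis
    by (simp add: Pmu_sym_def cvec_eq_norm_dir_gen[OF that] ccross_scale_left vector_smult_assoc)
qed

lemma Rmu_sym_dir_gen:
  "Rmu_sym mu xi v
     = (1/2) * ((ccross (\<i> *s dir_gen xi) v)$3 + complex_of_real mu * v$3) / gen_sym GSqrt xi"
  if "hnorm xi \<noteq> 0"
  using norm_nonzero_of_hnorm_nonzero[OF that] gen_sym_Sqrt_nonzero[OF that]
  by (simp add: Rmu_sym_def cvec_eq_norm_dir_gen[OF that] ccross_scale_left
      hnorm_eq_norm_mult_gen_Sqrt field_simps)

(* l, s, p, q stand for the generator symbols Lambda, sqrt(1 - Lambda^2), d_1/|nabla_h|,
   d_2/|nabla_h| at xi, and n for xi/|xi|. *)
lemma Rmu_Pmu_PL_frame_identity: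
  fixes l s p q m :: complex and u :: "complex^3"
  assumes "l^2 + s^2 = 1" and "p^2 + q^2 = -1" and "s \<noteq> 0" and "m^2 = 1"
  defines "n \<equiv> vector [- \<i> * s * p, - \<i> * s * q, l]"
  defines "w \<equiv> (1/2) *s ((u - cdot n u *s n) + m *s ccross (\<i> *s n) (u - cdot n u *s n))"
  shows "(1/2) * ((ccross (\<i> *s n) w)$3 + m * w$3) / s
       = (1/2) * (\<i> * cdot (vector [\<i> * q, - \<i> * p, 0]) u
                  + m * cdot (vector [\<i> * l * p, \<i> * l * q, s]) u)"
proof -
  obtain u1 u2 u3 where u: "u = vector [u1, u2, u3]"
  proof
    show "u = vector [u$1, u$2, u$3]" by (simp add: vec_eq_iff forall_3 vector_3)
  qed
  have "\<i>^2 = (-1::complex)" by simp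
  then show ?thesis
    unfolding n_def w_def u
    apply (simp add: cdot_def sum_3 ccross_def vector_3 assms(3) field_simps)
    using assms(1,2,4) by algebra
qed

definition proj_gen :: "real \<Rightarrow> real^3 \<Rightarrow> complex^3 \<Rightarrow> complex" where
  "proj_gen mu xi u = (1/2) * (\<i> * cdot (Gamma1_gen xi) u + complex_of_real mu * cdot (Gamma2_gen xi) u)"

lemma Rmu_Pmu_PL_sym:
  assumes "hnorm xi \<noteq> 0" and "mu\<^sup>2 = 1"
  shows "Rmu_sym mu xi (Pmu_sym mu xi (PL_sym xi u)) = proj_gen mu xi u"
  unfolding PL_sym_dir_gen[OF assms(1)] Pmu_sym_dir_gen[OF assms(1)] Rmu_sym_dir_gen[OF assms(1)]
    proj_gen_def dir_gen_def Gamma1_gen_def Gamma2_gen_def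
proof (rule Rmu_Pmu_PL_frame_identity)
  show "complex_of_real mu ^ 2 = 1"
    using assms(2) by (metis of_real_1 of_real_power)
qed (use gen_sym_Lam_Sqrt gen_sym_D1_D2[OF assms(1)] gen_sym_Sqrt_nonzero[OF assms(1)] in auto)

section \<open>Polynomials in the generator symbols\<close>

type_synonym gen_terms = "(complex \<times> gen list \<times> gen list \<times> gen list) list"

definition eval_terms :: "gen_terms \<Rightarrow> real^3 \<Rightarrow> real^3 \<Rightarrow> complex" where
  "eval_terms ts xi eta =
     (\<Sum>(c, d0, d1, d2) \<leftarrow> ts. c * prod_sym d0 xi * prod_sym d1 (xi - eta) * prod_sym d2 eta)"

definition mult_terms :: "gen_terms \<Rightarrow> gen_terms \<Rightarrow> gen_terms" where
  "mult_terms ts us =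
     [(c * c', d0 @ e0, d1 @ e1, d2 @ e2). (c, d0, d1, d2) \<leftarrow> ts, (c', e0, e1, e2) \<leftarrow> us]"

lemma eval_terms_append: "eval_terms (ts @ us) xi eta = eval_terms ts xi eta + eval_terms us xi eta"
  by (simp add: eval_terms_def)

lemma eval_terms_mult_terms:
  "eval_terms (mult_terms ts us) xi eta = eval_terms ts xi eta * eval_terms us xi eta"
proof (induction ts)
  case (Cons t ts)
  obtain c d0 d1 d2 where t: "t = (c, d0, d1, d2)" by (cases t)
  have "eval_terms (map (\<lambda>(c', e0, e1, e2). (c * c', d0 @ e0, d1 @ e1, d2 @ e2)) us) xi eta
      = c * prod_sym d0 xi * prod_sym d1 (xi - eta) * prod_sym d2 eta * eval_terms us xi eta"
    by (induction us) (auto simp: eval_terms_def prod_sym_def algebra_simps)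
  with Cons.IH show ?case
    by (simp add: mult_terms_def t eval_terms_append[symmetric]) (simp add: eval_terms_def algebra_simps)
qed (simp add: mult_terms_def eval_terms_def)

lemma eval_terms_scaled_at_coeff:
  "(\<Sum>(c, d0, d1, d2) \<leftarrow> ts. c * w * prod_sym d0 xi * prod_sym d1 (xi - eta) * prod_sym d2 eta)
     = w * eval_terms ts xi eta"
  by (induction ts) (auto simp: eval_terms_def algebra_simps)

lemma eval_terms_scaled_at_eta:
  "(\<Sum>(c, d0, d1, d2) \<leftarrow> ts. c * prod_sym d0 xi * prod_sym d1 (xi - eta) * w * prod_sym d2 eta)
     = w * eval_terms ts xi eta"
  by (induction ts) (auto simp: eval_terms_def algebra_simps)

definition gen_poly_on ::
  "((real^3) \<times> (real^3)) set \<Rightarrow> (real^3 \<Rightarrow> real^3 \<Rightarrow> complex) \<Rightarrow> bool" where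
  "gen_poly_on A f \<longleftrightarrow>
     (\<exists>ts. \<forall>xi eta. (xi, eta) \<in> A \<longrightarrow> f xi eta = eval_terms ts xi eta)"

lemma gen_poly_on_const: "gen_poly_on A (\<lambda>xi eta. c)"
  unfolding gen_poly_on_def
  by (rule exI[of _ "[(c, [], [], [])]"]) (simp add: eval_terms_def prod_sym_def)

lemma gen_poly_on_gen_xi: "gen_poly_on A (\<lambda>xi eta. gen_sym g xi)"
  unfolding gen_poly_on_def
  by (rule exI[of _ "[(1, [g], [], [])]"]) (simp add: eval_terms_def prod_sym_def)

lemma gen_poly_on_gen_diff: "gen_poly_on A (\<lambda>xi eta. gen_sym g (xi - eta))"
  unfolding gen_poly_on_def
  by (rule exI[of _ "[(1, [], [g], [])]"]) (simp add: eval_terms_def prod_sym_def)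

lemma gen_poly_on_gen_eta: "gen_poly_on A (\<lambda>xi eta. gen_sym g eta)"
  unfolding gen_poly_on_def
  by (rule exI[of _ "[(1, [], [], [g])]"]) (simp add: eval_terms_def prod_sym_def)

lemma gen_poly_on_add:
  assumes "gen_poly_on A f" and "gen_poly_on A g"
  shows "gen_poly_on A (\<lambda>xi eta. f xi eta + g xi eta)"
proof -
  obtain ts us where "\<And>xi eta. (xi, eta) \<in> A \<Longrightarrow> f xi eta = eval_terms ts xi eta"
    and "\<And>xi eta. (xi, eta) \<in> A \<Longrightarrow> g xi eta = eval_terms us xi eta"
    using assms unfolding gen_poly_on_def by fast
  then show ?thesis
    unfolding gen_poly_on_def by (intro exI[of _ "ts @ us"]) (auto simp: eval_terms_append)
qed

lemma gen_poly_on_mult: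
  assumes "gen_poly_on A f" and "gen_poly_on A g"
  shows "gen_poly_on A (\<lambda>xi eta. f xi eta * g xi eta)"
proof -
  obtain ts us where "\<And>xi eta. (xi, eta) \<in> A \<Longrightarrow> f xi eta = eval_terms ts xi eta"
    and "\<And>xi eta. (xi, eta) \<in> A \<Longrightarrow> g xi eta = eval_terms us xi eta"
    using assms unfolding gen_poly_on_def by fast
  then show ?thesis
    unfolding gen_poly_on_def by (intro exI[of _ "mult_terms ts us"]) (auto simp: eval_terms_mult_terms)
qed

lemma gen_poly_on_uminus: "gen_poly_on A f \<Longrightarrow> gen_poly_on A (\<lambda>xi eta. - f xi eta)"
  using gen_poly_on_mult[OF gen_poly_on_const[of A "-1"]] by simp

lemma gen_poly_on_diff:
  "gen_poly_on A f \<Longrightarrow> gen_poly_on A g \<Longrightarrow> gen_poly_on A (\<lambda>xi eta. f xi eta - g xi eta)"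
  using gen_poly_on_add[OF _ gen_poly_on_uminus, of A f g] by simp

lemma gen_poly_on_divide_const: "gen_poly_on A f \<Longrightarrow> gen_poly_on A (\<lambda>xi eta. f xi eta / c)"
  using gen_poly_on_mult[OF _ gen_poly_on_const, of A f "inverse c"] by (simp add: divide_inverse)

lemmas gen_poly_on_intros = gen_poly_on_const gen_poly_on_gen_xi gen_poly_on_gen_diff
  gen_poly_on_gen_eta gen_poly_on_add gen_poly_on_mult gen_poly_on_uminus gen_poly_on_diff
  gen_poly_on_divide_const

lemma gen_poly_on_dir_gen_xi_Rinv_gen:
  "gen_poly_on A (\<lambda>xi eta. cdot (dir_gen xi) (Rinv_gen mu1 (xi - eta)))"
  unfolding dir_gen_def Rinv_gen_def Gamma1_gen_def Gamma2_gen_def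
  by (simp add: cdot_def sum_3 del: gen_sym.simps) (intro gen_poly_on_intros)

lemma gen_poly_on_dir_gen_eta_Rinv_gen:
  "gen_poly_on A (\<lambda>xi eta. cdot (dir_gen eta) (Rinv_gen mu1 (xi - eta)))"
  unfolding dir_gen_def Rinv_gen_def Gamma1_gen_def Gamma2_gen_def
  by (simp add: cdot_def sum_3 del: gen_sym.simps) (intro gen_poly_on_intros)

lemma gen_poly_on_proj_gen_Rinv_gen: "gen_poly_on A (\<lambda>xi eta. proj_gen mu xi (Rinv_gen mu2 eta))"
  unfolding proj_gen_def Rinv_gen_def Gamma1_gen_def Gamma2_gen_def
  by (simp add: cdot_def sum_3 del: gen_sym.simps) (intro gen_poly_on_intros)

section \<open>The multiplier\<close>

definition nonvertical_pairs :: "((real^3) \<times> (real^3)) set" where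
  "nonvertical_pairs = {(xi, eta). hnorm xi \<noteq> 0 \<and> hnorm eta \<noteq> 0 \<and> hnorm (xi - eta) \<noteq> 0}"

lemma m_sym_eq_proj_gen:
  assumes "hnorm xi \<noteq> 0" and "mu\<^sup>2 = 1"
  shows "m_sym mu mu1 mu2 xi eta
       = - (\<i> * cdot (cvec xi) (Rinv_sym mu1 (xi - eta))) * proj_gen mu xi (Rinv_sym mu2 eta)"
  unfolding m_sym_def Rmu_Pmu_PL_sym[OF assms] proj_gen_def cdot_minus_right cdot_scale_right
  by (simp add: algebra_simps)

lemma m_sym_factor_norm_xi:
  assumes "(xi, eta) \<in> nonvertical_pairs" and "mu\<^sup>2 = 1"
  shows "m_sym mu mu1 mu2 xi eta = complex_of_real (norm xi)
           * (- (\<i> * cdot (dir_gen xi) (Rinv_gen mu1 (xi - eta))) * proj_gen mu xi (Rinv_gen mu2 eta))"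
  using assms
  by (simp add: nonvertical_pairs_def m_sym_eq_proj_gen cvec_eq_norm_dir_gen Rinv_sym_eq_Rinv_gen
      cdot_scale_left)

lemma m_sym_factor_norm_eta:
  assumes "(xi, eta) \<in> nonvertical_pairs" and "mu\<^sup>2 = 1"
  shows "m_sym mu mu1 mu2 xi eta = complex_of_real (norm eta)
           * (- (\<i> * cdot (dir_gen eta) (Rinv_gen mu1 (xi - eta))) * proj_gen mu xi (Rinv_gen mu2 eta))"
proof -
  have "cdot (cvec xi) (Rinv_sym mu1 (xi - eta)) = cdot (cvec eta) (Rinv_sym mu1 (xi - eta))"
    using cdot_cvec_Rinv_sym[of "xi - eta" mu1] assms(1)
    by (simp add: nonvertical_pairs_def cvec_diff cdot_diff_left)
  then show ?thesis
    using assms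
    by (simp add: nonvertical_pairs_def m_sym_eq_proj_gen cvec_eq_norm_dir_gen Rinv_sym_eq_Rinv_gen
        cdot_scale_left)
qed

lemma m_sym_expansion_norm_xi:
  assumes "mu\<^sup>2 = 1"
  shows "\<exists>ts. \<forall>xi eta. (xi, eta) \<in> nonvertical_pairs \<longrightarrow>
           m_sym mu mu1 mu2 xi eta = complex_of_real (norm xi) * eval_terms ts xi eta"
proof -
  have "gen_poly_on nonvertical_pairs (\<lambda>xi eta.
          - (\<i> * cdot (dir_gen xi) (Rinv_gen mu1 (xi - eta))) * proj_gen mu xi (Rinv_gen mu2 eta))"
    by (intro gen_poly_on_intros gen_poly_on_dir_gen_xi_Rinv_gen gen_poly_on_proj_gen_Rinv_gen)
  then show ?thesis
    unfolding gen_poly_on_def using m_sym_factor_norm_xi[OF _ assms] by metis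
qed

lemma m_sym_expansion_norm_eta:
  assumes "mu\<^sup>2 = 1"
  shows "\<exists>ts. \<forall>xi eta. (xi, eta) \<in> nonvertical_pairs \<longrightarrow>
           m_sym mu mu1 mu2 xi eta = complex_of_real (norm eta) * eval_terms ts xi eta"
proof -
  have "gen_poly_on nonvertical_pairs (\<lambda>xi eta.
          - (\<i> * cdot (dir_gen eta) (Rinv_gen mu1 (xi - eta))) * proj_gen mu xi (Rinv_gen mu2 eta))"
    by (intro gen_poly_on_intros gen_poly_on_dir_gen_eta_Rinv_gen gen_poly_on_proj_gen_Rinv_gen)
  then show ?thesis
    unfolding gen_poly_on_def using m_sym_factor_norm_eta[OF _ assms] by metis
qed

theorem lemma3p8:
  fixes mu mu1 mu2 :: real
  assumes "mu \<in> {-1, 1}" and "mu1 \<in> {-1, 1}" and "mu2 \<in> {-1, 1}"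
  shows "(\<exists>terms :: (complex \<times> gen list \<times> gen list \<times> gen list) list.
            \<forall>xi eta :: real^3. hnorm xi \<noteq> 0 \<and> hnorm eta \<noteq> 0 \<and> hnorm (xi - eta) \<noteq> 0 \<longrightarrow>
              m_sym mu mu1 mu2 xi eta =
              (\<Sum>(c, d0, d1, d2) \<leftarrow> terms.
                 c * complex_of_real (norm xi) * prod_sym d0 xi * prod_sym d1 (xi - eta) * prod_sym d2 eta))
       \<and> (\<exists>terms :: (complex \<times> gen list \<times> gen list \<times> gen list) list.
            \<forall>xi eta :: real^3. hnorm xi \<noteq> 0 \<and> hnorm eta \<noteq> 0 \<and> hnorm (xi - eta) \<noteq> 0 \<longrightarrow>
              m_sym mu mu1 mu2 xi eta =
              (\<Sum>(c, d0, d1, d2) \<leftarrow> terms.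
                 c * prod_sym d0 xi * prod_sym d1 (xi - eta) * complex_of_real (norm eta) * prod_sym d2 eta))"
proof -
  have "mu\<^sup>2 = 1" using assms(1) by auto
  then show ?thesis
    using m_sym_expansion_norm_xi m_sym_expansion_norm_eta
    unfolding eval_terms_scaled_at_coeff eval_terms_scaled_at_eta nonvertical_pairs_def
    by fast
qed

end
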